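(* Let $n>s\ge1$ be integers. If $F_{s,k}(n)\neq 0$ for every $k\in\{1,2,\dots,n\}$, then for any two $n$-multisets $A,B$ of complex numbers, $A^{(s)}=B^{(s)}$ implies $A=B$.
   Context: An $n$-multiset is a multiset $A=\{a_1,\dots,a_n\}$ of $n$ numbers, counted with multiplicity. For $1\le s\le n$, $A^{(s)}$ denotes the multiset of the $\binom{n}{s}$ numbers $a_{i_1}+\dots+a_{i_s}$ over all $1\le i_1<\dots<i_s\le n$. For an integer $j\ge0$, $\binom{x}{j}=x(x-1)\cdots(x-j+1)/j!$ as a polynomial in $x$, and $\binom{x}{j}=0$ for $j<0$. For integers $s\ge1$, $k\ge1$, the Moser polynomial is $F_{s,k}(x)=\sum_{p=1}^{s}(-1)^{p-1}p^{k-1}\binom{x}{s-p}$; for integers $s<1$ set $F_{s,k}\equiv0$. *)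

theory Defs
  imports Complex_Main "HOL-Library.Multiset"
begin

definition subset_sums :: "nat \<Rightarrow> complex list \<Rightarrow> complex multiset" where
  "subset_sums s xs =
     image_mset (\<lambda>I. \<Sum>i\<in>I. xs ! i)
       (mset_set {I. I \<subseteq> {0..<length xs} \<and> card I = s})"

definition moser :: "int \<Rightarrow> nat \<Rightarrow> real \<Rightarrow> real" where
  "moser s k x = (if s < 1 then 0 else
     (\<Sum>p = 1..nat s. (-1) ^ (p - 1) * real p ^ (k - 1) * (x gchoose (nat s - p))))"

end

theory Submission
  imports Defs "HOL-Computational_Algebra.Polynomial"
begin

text \<open>
  Let T_k(s) be the k-th power sum of A^(s), i.e. the sum of (a_I)^k over all s-subsets I of the indices,
  where a_I is the sum of the a_i with i in I, and let P_k be the k-th power sum of A. Marking a point j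
  of I and moving it in or out of I gives
    s T_k(s) = sum_{q=1..s} (-1)^(q-1) sum_{|J|=s-q} sum_j (a_J + q a_j)^k,
  and expanding the inner powers binomially shows that T_k(s) - F_{s,k}(n) P_k only depends on power sums
  of degree below k. Hence if A^(s) = B^(s) and no F_{s,k}(n) vanishes, induction on k gives
  P_k(A) = P_k(B) for k <= n. By Newton's identities these power sums determine prod_{a in A} (1 + a X),
  whose roots -1/a together with |A| = n determine A.
\<close>

section \<open>Alternating sums and binomial coefficients\<close>

lemma alternating_sum_Suc_shift:
  fixes f :: "nat \<Rightarrow> 'a::comm_ring_1"
  shows "(\<Sum>q=1..Suc s. (-1) ^ (q - 1) * f q) = f 1 - (\<Sum>q=1..s. (-1) ^ (q - 1) * f (Suc q))"
proof -
  have "(\<Sum>q=1..Suc s. (-1) ^ (q - 1) * f q) = f 1 + (\<Sum>q=Suc 1..Suc s. (-1) ^ (q - 1) * f q)"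
    by (subst sum.atLeast_Suc_atMost) auto
  also have "(\<Sum>q=Suc 1..Suc s. (-1) ^ (q - 1) * f q) = (\<Sum>q=1..s. (-1) ^ q * f (Suc q))"
    by (subst sum.shift_bounds_cl_Suc_ivl) simp
  also have "\<dots> = - (\<Sum>q=1..s. (-1) ^ (q - 1) * f (Suc q))"
    by (subst sum_negf[symmetric], rule sum.cong) (auto simp: power_eq_if)
  finally show ?thesis by simp
qed

lemma Suc_times_choose_Suc_add: "Suc m * (n choose Suc m) + m * (n choose m) = n * (n choose m)"
proof -
  have "Suc m * (n choose Suc m) = (n - m) * (n choose m)"
    by (simp only: binomial_absorption binomial_absorb_comp)
  moreover have "(n - m) * (n choose m) + m * (n choose m) = n * (n choose m)"
    by (cases "m \<le> n") (simp_all add: add_mult_distrib[symmetric])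
  ultimately show ?thesis by simp
qed

lemma mult_choose_eq_alternating_sum:
  "of_nat m * of_nat (n choose m) =
     (of_nat n * (\<Sum>q=1..m. (-1) ^ (q - 1) * of_nat (n choose (m - q))) :: 'a::comm_ring_1)"
proof (induction m)
  case 0
  show ?case by simp
next
  case (Suc m)
  have "of_nat n * (\<Sum>q=1..Suc m. (-1) ^ (q - 1) * of_nat (n choose (Suc m - q)))
      = of_nat n * of_nat (n choose m) - (of_nat m * of_nat (n choose m) :: 'a)"
    unfolding alternating_sum_Suc_shift by (simp add: Suc.IH right_diff_distrib)
  also have "\<dots> = of_nat (Suc m) * of_nat (n choose Suc m)"
    using arg_cong[OF Suc_times_choose_Suc_add[of m n], of "of_nat :: nat \<Rightarrow> 'a"]
    by (simp add: algebra_simps)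
  finally show ?case by simp
qed

lemma sum_triangle_swap:
  fixes s :: nat
  shows "(\<Sum>q=1..s. \<Sum>p=1..s - q. g p q) = (\<Sum>p=1..s. \<Sum>q=1..s - p. (g p q :: 'a::comm_monoid_add))"
proof -
  have "(\<Sum>q=1..s. \<Sum>p=1..s - q. g p q) = (\<Sum>q\<in>{1..s}. \<Sum>p | p \<in> {1..s} \<and> p + q \<le> s. g p q)"
    by (intro sum.cong) auto
  also have "\<dots> = (\<Sum>p\<in>{1..s}. \<Sum>q | q \<in> {1..s} \<and> p + q \<le> s. g p q)"
    by (rule sum.swap_restrict) auto
  also have "\<dots> = (\<Sum>p=1..s. \<Sum>q=1..s - p. g p q)"
    by (intro sum.cong) auto
  finally show ?thesis .
qed

definition moser_coeff :: "nat \<Rightarrow> nat \<Rightarrow> nat \<Rightarrow> 'a::comm_ring_1" where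
  "moser_coeff s k n = (\<Sum>p=1..s. (-1) ^ (p - 1) * of_nat p ^ (k - 1) * of_nat (n choose (s - p)))"

lemma moser_coeff_recurrence:
  assumes "1 \<le> k"
  shows "(\<Sum>q=1..s. (-1) ^ (q - 1) * (of_nat q ^ k * of_nat (n choose (s - q)) + of_nat n * moser_coeff (s - q) k n))
           = of_nat s * (moser_coeff s k n :: 'a::comm_ring_1)"
proof -
  define c :: "nat \<Rightarrow> 'a" where "c p = (-1) ^ (p - 1) * of_nat p ^ (k - 1)" for p
  define g :: "nat \<Rightarrow> nat \<Rightarrow> 'a"
    where "g p q = of_nat n * ((-1) ^ (q - 1) * (c p * of_nat (n choose (s - (p + q)))))" for p q
  have powers: "(\<Sum>q=1..s. (-1) ^ (q - 1) * (of_nat q ^ k * of_nat (n choose (s - q))))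
      = (\<Sum>p=1..s. c p * of_nat p * of_nat (n choose (s - p)))"
    using assms by (intro sum.cong) (auto simp: c_def ac_simps dest!: Suc_le_D)
  have "of_nat s * moser_coeff s k n - (\<Sum>p=1..s. c p * of_nat p * of_nat (n choose (s - p)))
      = (\<Sum>p=1..s. c p * (of_nat (s - p) * of_nat (n choose (s - p))))"
    unfolding moser_coeff_def sum_distrib_left sum_subtractf[symmetric]
    by (rule sum.cong) (auto simp: c_def of_nat_diff algebra_simps)
  also have "\<dots> = (\<Sum>p=1..s. c p * (of_nat n * (\<Sum>q=1..s - p. (-1) ^ (q - 1) * of_nat (n choose (s - p - q)))))"
    unfolding mult_choose_eq_alternating_sum ..
  also have "\<dots> = (\<Sum>p=1..s. \<Sum>q=1..s - p. g p q)"
    by (simp add: g_def sum_distrib_left ac_simps)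
  also have "\<dots> = (\<Sum>q=1..s. \<Sum>p=1..s - q. g p q)"
    by (rule sum_triangle_swap[symmetric])
  also have "\<dots> = (\<Sum>q=1..s. (-1) ^ (q - 1) * (of_nat n * moser_coeff (s - q) k n))"
    by (simp add: g_def c_def moser_coeff_def sum_distrib_left ac_simps)
  finally show ?thesis
    unfolding distrib_left sum.distrib powers by (simp add: algebra_simps)
qed

lemma of_real_moser:
  "1 \<le> s \<Longrightarrow> of_real (moser (int s) k (real n)) = (moser_coeff s k n :: 'a::{real_algebra_1, comm_ring_1})"
  by (simp add: moser_def moser_coeff_def binomial_gbinomial[symmetric])

section \<open>Power sums of subset sums\<close>

definition subset_power_sum :: "'i set \<Rightarrow> ('i \<Rightarrow> 'a::comm_semiring_1) \<Rightarrow> nat \<Rightarrow> nat \<Rightarrow> 'a" where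
  "subset_power_sum X a s k = (\<Sum>I | I \<subseteq> X \<and> card I = s. sum a I ^ k)"

definition power_sum :: "'i set \<Rightarrow> ('i \<Rightarrow> 'a::comm_semiring_1) \<Rightarrow> nat \<Rightarrow> 'a" where
  "power_sum X a k = (\<Sum>i\<in>X. a i ^ k)"

definition shifted_subset_power_sum ::
    "'i set \<Rightarrow> ('i \<Rightarrow> 'a::comm_semiring_1) \<Rightarrow> nat \<Rightarrow> nat \<Rightarrow> nat \<Rightarrow> 'a" where
  "shifted_subset_power_sum X a s p k =
     (\<Sum>I | I \<subseteq> X \<and> card I = s. \<Sum>j\<in>X. (sum a I + of_nat p * a j) ^ k)"

definition pointed_subset_power_sum ::
    "'i set \<Rightarrow> ('i \<Rightarrow> 'a::comm_semiring_1) \<Rightarrow> nat \<Rightarrow> nat \<Rightarrow> nat \<Rightarrow> 'a" where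
  "pointed_subset_power_sum X a s p k =
     (\<Sum>I | I \<subseteq> X \<and> card I = s. \<Sum>j\<in>I. (sum a I + of_nat p * a j) ^ k)"

lemma card_subsets_0: "finite X \<Longrightarrow> {I. I \<subseteq> X \<and> card I = 0} = {{}}"
  by (auto dest: finite_subset)

lemma subset_power_sum_0: "finite X \<Longrightarrow> subset_power_sum X a s 0 = of_nat (card X choose s)"
  by (simp add: subset_power_sum_def n_subsets)

lemma subset_power_sum_card_0: "finite X \<Longrightarrow> 1 \<le> k \<Longrightarrow> subset_power_sum X a 0 k = 0"
  by (simp add: subset_power_sum_def card_subsets_0 power_0_left)

lemma power_sum_0: "power_sum X a 0 = of_nat (card X)"
  by (simp add: power_sum_def)

lemma pointed_subset_power_sum_card_0: "finite X \<Longrightarrow> pointed_subset_power_sum X a 0 p k = 0"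
  by (simp add: pointed_subset_power_sum_def card_subsets_0)

lemma pointed_subset_power_sum_shift_0:
  "finite X \<Longrightarrow> pointed_subset_power_sum X a s 0 k = of_nat s * subset_power_sum X a s k"
  unfolding pointed_subset_power_sum_def subset_power_sum_def
  by (simp add: sum_distrib_left)

lemma pointed_subset_power_sum_Suc:
  fixes a :: "'i \<Rightarrow> 'a::comm_ring_1"
  assumes "finite X"
  shows "pointed_subset_power_sum X a (Suc s) p k =
           shifted_subset_power_sum X a s (Suc p) k - pointed_subset_power_sum X a s (Suc p) k"
proof -
  let ?S = "\<lambda>s. {I. I \<subseteq> X \<and> card I = s}"
  let ?h = "\<lambda>J j. (sum a J + of_nat (Suc p) * a j) ^ k"
  have "shifted_subset_power_sum X a s (Suc p) k - pointed_subset_power_sum X a s (Suc p) k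
      = (\<Sum>J\<in>?S s. \<Sum>j\<in>X - J. ?h J j)"
    unfolding shifted_subset_power_sum_def pointed_subset_power_sum_def sum_subtractf[symmetric]
    by (rule sum.cong) (auto simp: sum.subset_diff[of _ X] assms)
  also have "\<dots> = (\<Sum>(J, j)\<in>Sigma (?S s) (\<lambda>J. X - J). ?h J j)"
    using assms by (intro sum.Sigma) auto
  also have "\<dots> = (\<Sum>(I, j)\<in>Sigma (?S (Suc s)) (\<lambda>I. I). (sum a I + of_nat p * a j) ^ k)"
    \<comment> \<open>add the marked point j to J, or remove it from I\<close>
    by (rule sum.reindex_bij_witness[where i = "\<lambda>(I, j). (I - {j}, j)" and j = "\<lambda>(J, j). (insert j J, j)"])
      (auto simp: card_insert_if finite_subset[OF _ assms] algebra_simps)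
  also have "\<dots> = pointed_subset_power_sum X a (Suc s) p k"
    unfolding pointed_subset_power_sum_def using assms by (intro sum.Sigma[symmetric]) (auto dest: finite_subset)
  finally show ?thesis by simp
qed

lemma pointed_subset_power_sum_alternating:
  fixes a :: "'i \<Rightarrow> 'a::comm_ring_1"
  assumes "finite X"
  shows "pointed_subset_power_sum X a s p k =
           (\<Sum>q=1..s. (-1) ^ (q - 1) * shifted_subset_power_sum X a (s - q) (p + q) k)"
proof (induction s arbitrary: p)
  case 0
  show ?case using assms by (simp add: pointed_subset_power_sum_card_0)
next
  case (Suc s)
  show ?case
    unfolding alternating_sum_Suc_shift pointed_subset_power_sum_Suc[OF assms] Suc[of "Suc p"]
    by simp
qed

lemma shifted_subset_power_sum_binomial:
  "shifted_subset_power_sum X a s p k =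
     (\<Sum>m\<le>k. of_nat (k choose m) * of_nat p ^ (k - m) * subset_power_sum X a s m * power_sum X a (k - m))"
proof -
  let ?S = "{I. I \<subseteq> X \<and> card I = s}"
  let ?c = "\<lambda>m. of_nat (k choose m) * of_nat p ^ (k - m)"
  have "shifted_subset_power_sum X a s p k = (\<Sum>I\<in>?S. \<Sum>j\<in>X. \<Sum>m\<le>k. ?c m * (sum a I ^ m * a j ^ (k - m)))"
    unfolding shifted_subset_power_sum_def binomial_ring by (simp add: power_mult_distrib algebra_simps)
  also have "\<dots> = (\<Sum>m\<le>k. \<Sum>I\<in>?S. \<Sum>j\<in>X. ?c m * (sum a I ^ m * a j ^ (k - m)))"
    by (subst sum.swap, subst (2) sum.swap) (rule refl)
  also have "\<dots> = (\<Sum>m\<le>k. ?c m * ((\<Sum>I\<in>?S. sum a I ^ m) * (\<Sum>j\<in>X. a j ^ (k - m))))"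
    by (simp add: sum_distrib_left sum_distrib_right mult.assoc) (rule sum.cong[OF refl], rule sum.swap)
  finally show ?thesis by (simp add: subset_power_sum_def power_sum_def mult.assoc)
qed

lemma shifted_subset_power_sum_diff:
  fixes a b :: "'i \<Rightarrow> 'a::comm_ring_1"
  assumes "finite X" and "1 \<le> k"
    and lower_subset_sums: "\<And>m s. m \<in> {1..<k} \<Longrightarrow> subset_power_sum X a s m = subset_power_sum X b s m"
    and lower_sums: "\<And>j. j \<in> {1..<k} \<Longrightarrow> power_sum X a j = power_sum X b j"
  shows "shifted_subset_power_sum X a s q k - shifted_subset_power_sum X b s q k =
           of_nat q ^ k * of_nat (card X choose s) * (power_sum X a k - power_sum X b k)
           + of_nat (card X) * (subset_power_sum X a s k - subset_power_sum X b s k)"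
proof -
  define f where "f m = of_nat (k choose m) * of_nat q ^ (k - m) *
    (subset_power_sum X a s m * power_sum X a (k - m) - subset_power_sum X b s m * power_sum X b (k - m))" for m
  have "shifted_subset_power_sum X a s q k - shifted_subset_power_sum X b s q k = (\<Sum>m\<le>k. f m)"
    unfolding shifted_subset_power_sum_binomial f_def sum_subtractf[symmetric] by (simp add: algebra_simps)
  also have "{..k} = insert 0 (insert k {1..<k})"
    using \<open>1 \<le> k\<close> by auto
  also have "(\<Sum>m\<in>insert 0 (insert k {1..<k}). f m) = f 0 + f k"
  proof -
    have "f m = 0" if "m \<in> {1..<k}" for m
    proof -
      have "k - m \<in> {1..<k}"
        using that by auto
      then show ?thesis
        using lower_subset_sums[OF that] lower_sums by (simp add: f_def)
    qed
    then show ?thesis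
      using \<open>1 \<le> k\<close> by simp
  qed
  finally show ?thesis
    using assms(1,2) by (simp add: f_def subset_power_sum_0 power_sum_0 algebra_simps)
qed

lemma subset_power_sum_diff_if_lower_eq:
  fixes a b :: "'i \<Rightarrow> 'a::field_char_0"
  assumes "finite X" and "1 \<le> k"
    and lower_subset_sums: "\<And>m s. m \<in> {1..<k} \<Longrightarrow> subset_power_sum X a s m = subset_power_sum X b s m"
    and lower_sums: "\<And>j. j \<in> {1..<k} \<Longrightarrow> power_sum X a j = power_sum X b j"
  shows "subset_power_sum X a s k - subset_power_sum X b s k =
           moser_coeff s k (card X) * (power_sum X a k - power_sum X b k)"
proof (induction s rule: less_induct)
  case (less s)
  let ?n = "card X" and ?dP = "power_sum X a k - power_sum X b k"
  show ?case
  proof (cases "s = 0")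
    case True
    then show ?thesis
      using assms(1,2) by (simp add: subset_power_sum_card_0 moser_coeff_def)
  next
    case False
    have "of_nat s * (subset_power_sum X a s k - subset_power_sum X b s k)
        = pointed_subset_power_sum X a s 0 k - pointed_subset_power_sum X b s 0 k"
      using assms(1) by (simp add: pointed_subset_power_sum_shift_0 algebra_simps)
    also have "\<dots> = (\<Sum>q=1..s. (-1) ^ (q - 1) *
        (shifted_subset_power_sum X a (s - q) q k - shifted_subset_power_sum X b (s - q) q k))"
      unfolding pointed_subset_power_sum_alternating[OF assms(1)] sum_subtractf[symmetric]
      by (simp add: algebra_simps)
    also have "\<dots> = (\<Sum>q=1..s. (-1) ^ (q - 1) *
        (of_nat q ^ k * of_nat (?n choose (s - q)) + of_nat ?n * moser_coeff (s - q) k ?n)) * ?dP"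
      unfolding sum_distrib_right
    proof (rule sum.cong)
      fix q assume "q \<in> {1..s}"
      then have IH: "subset_power_sum X a (s - q) k - subset_power_sum X b (s - q) k = moser_coeff (s - q) k ?n * ?dP"
        using less.IH[of "s - q"] by simp
      have R: "shifted_subset_power_sum X a (s - q) q k - shifted_subset_power_sum X b (s - q) q k =
          of_nat q ^ k * of_nat (?n choose (s - q)) * ?dP + of_nat ?n * (moser_coeff (s - q) k ?n * ?dP)"
        unfolding IH[symmetric] by (rule shifted_subset_power_sum_diff[OF assms])
      show "(-1) ^ (q - 1) *
          (shifted_subset_power_sum X a (s - q) q k - shifted_subset_power_sum X b (s - q) q k) =
          (-1) ^ (q - 1) * (of_nat q ^ k * of_nat (?n choose (s - q)) + of_nat ?n * moser_coeff (s - q) k ?n) * ?dP"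
        unfolding R by (simp add: algebra_simps)
    qed simp
    also have "\<dots> = of_nat s * (moser_coeff s k ?n * ?dP)"
      unfolding moser_coeff_recurrence[OF assms(2)] by simp
    finally show ?thesis
      using False by simp
  qed
qed

lemma subset_power_sum_diff:
  fixes a b :: "'i \<Rightarrow> 'a::field_char_0"
  assumes "finite X" and "1 \<le> k"
    and "\<And>j. j \<in> {1..<k} \<Longrightarrow> power_sum X a j = power_sum X b j"
  shows "subset_power_sum X a s k - subset_power_sum X b s k =
           moser_coeff s k (card X) * (power_sum X a k - power_sum X b k)"
  using assms(2,3)
proof (induction k arbitrary: s rule: less_induct)
  case (less k)
  have lower_subset_sums: "subset_power_sum X a s m = subset_power_sum X b s m" if "m \<in> {1..<k}" for m s
    using less.IH[of m s] less.prems that by auto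
  show ?case
    using subset_power_sum_diff_if_lower_eq[OF assms(1) less.prems(1) lower_subset_sums less.prems(2)] by simp
qed

lemma power_sums_eq_if_subset_power_sums_eq:
  fixes a b :: "'i \<Rightarrow> 'a::field_char_0"
  assumes "finite X"
    and subset_sums_eq: "\<And>k. subset_power_sum X a s k = subset_power_sum X b s k"
    and moser_nonzero: "\<And>k. k \<in> {1..K} \<Longrightarrow> moser_coeff s k (card X) \<noteq> (0 :: 'a)"
    and "k \<in> {1..K}"
  shows "power_sum X a k = power_sum X b k"
  using \<open>k \<in> {1..K}\<close>
proof (induction k rule: less_induct)
  case (less k)
  have "moser_coeff s k (card X) * (power_sum X a k - power_sum X b k) = 0"
    using subset_power_sum_diff[OF assms(1), of k a b s] less subset_sums_eq by auto
  then show ?case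
    using moser_nonzero[OF less.prems] by simp
qed

section \<open>Power sums determine a multiset\<close>

definition elem_sym_poly :: "'a::comm_ring_1 multiset \<Rightarrow> 'a poly" where
  "elem_sym_poly A = (\<Prod>a\<in>#A. [:1, a:])"

definition mset_power_sum :: "'a::comm_semiring_1 multiset \<Rightarrow> nat \<Rightarrow> 'a" where
  "mset_power_sum A q = (\<Sum>a\<in>#A. a ^ q)"

lemma elem_sym_poly_add_mset: "elem_sym_poly (add_mset a A) = [:1, a:] * elem_sym_poly A"
  by (simp add: elem_sym_poly_def)

lemma coeff_elem_sym_poly_add_mset:
  "coeff (elem_sym_poly (add_mset a A)) j =
     coeff (elem_sym_poly A) j + (if j = 0 then 0 else a * coeff (elem_sym_poly A) (j - 1))"
  by (cases j) (simp_all add: elem_sym_poly_add_mset mult_pCons_left coeff_pCons)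

lemma coeff_0_elem_sym_poly: "coeff (elem_sym_poly A) 0 = 1"
  by (induction A) (simp_all add: coeff_elem_sym_poly_add_mset, simp add: elem_sym_poly_def)

lemma degree_elem_sym_poly: "degree (elem_sym_poly A) \<le> size A"
proof (induction A)
  case empty
  show ?case by (simp add: elem_sym_poly_def)
next
  case (add a A)
  have "degree (elem_sym_poly (add_mset a A)) \<le> degree [:1, a:] + degree (elem_sym_poly A)"
    unfolding elem_sym_poly_add_mset by (rule degree_mult_le)
  moreover have "degree [:1, a:] \<le> 1"
    by simp
  ultimately show ?case
    using add.IH by simp
qed

lemma newton_identity:
  "of_nat s * coeff (elem_sym_poly A) s =
     (\<Sum>q=1..s. (-1) ^ (q - 1) * coeff (elem_sym_poly A) (s - q) * mset_power_sum A q)"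
proof (induction A arbitrary: s)
  case empty
  show ?case by (cases s) (simp_all add: elem_sym_poly_def mset_power_sum_def)
next
  case (add a A)
  define e where "e j = coeff (elem_sym_poly A) j" for j
  define G where "G t = (\<Sum>q=1..t. (-1) ^ (q - 1) * (e (t - q) * a ^ q))" for t
  have newton: "of_nat t * e t = (\<Sum>q=1..t. (-1) ^ (q - 1) * e (t - q) * mset_power_sum A q)" for t
    unfolding e_def by (rule add.IH)
  have power_sum_add: "mset_power_sum (add_mset a A) q = mset_power_sum A q + a ^ q" for q
    by (simp add: mset_power_sum_def)
  have G_Suc: "G (Suc t) = a * e t - a * G t" for t
    unfolding G_def alternating_sum_Suc_shift by (simp add: sum_distrib_left ac_simps)
  show ?case
  proof (cases s)
    case 0
    then show ?thesis by simp
  next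
    case (Suc t)
    have "(\<Sum>q=1..Suc t. (-1) ^ (q - 1) * coeff (elem_sym_poly (add_mset a A)) (Suc t - q)
            * mset_power_sum (add_mset a A) q)
        = (\<Sum>q=1..Suc t. (-1) ^ (q - 1) * e (Suc t - q) * (mset_power_sum A q + a ^ q))
          + a * (\<Sum>q=1..t. (-1) ^ (q - 1) * e (t - q) * (mset_power_sum A q + a ^ q))"
      by (simp add: coeff_elem_sym_poly_add_mset e_def power_sum_add sum.cl_ivl_Suc Suc_diff_le
          sum.distrib sum_distrib_left algebra_simps)
    also have "\<dots> = of_nat (Suc t) * e (Suc t) + G (Suc t) + a * (of_nat t * e t + G t)"
      unfolding newton G_def ring_distribs sum.distrib sum_distrib_left by (simp add: ac_simps)
    also have "\<dots> = of_nat (Suc t) * (e (Suc t) + a * e t)"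
      by (simp add: G_Suc algebra_simps)
    finally show ?thesis
      by (simp add: Suc coeff_elem_sym_poly_add_mset e_def)
  qed
qed

lemma order_linear_one_plus:
  fixes a b :: "'a::field"
  assumes "b \<noteq> 0"
  shows "order (-1 / b) [:1, a:] = (if a = b then 1 else 0)"
proof (cases "a = b")
  case True
  have "poly [:1, a:] (-1 / b) = 0"
    using True assms by simp
  then have "order (-1 / b) [:1, a:] \<noteq> 0"
    using order_root[of "[:1, a:]" "-1 / b"] by auto
  moreover have "order (-1 / b) [:1, a:] \<le> 1"
    using order_degree[of "[:1, a:]" "-1 / b"] True assms by simp
  ultimately show ?thesis
    using True by simp
next
  case False
  then have "poly [:1, a:] (-1 / b) \<noteq> 0"
    using assms by (simp add: field_simps)
  then show ?thesis
    using False by (simp add: order_0I)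
qed

lemma order_elem_sym_poly:
  fixes b :: "'a::field"
  assumes "b \<noteq> 0"
  shows "order (-1 / b) (elem_sym_poly A) = count A b"
proof (induction A)
  case empty
  show ?case by (simp add: elem_sym_poly_def)
next
  case (add a A)
  have nonzero: "[:1, a:] * elem_sym_poly A \<noteq> 0"
    by (metis coeff_0_elem_sym_poly elem_sym_poly_add_mset one_neq_zero coeff_0)
  then show ?case
    unfolding elem_sym_poly_add_mset order_mult[OF nonzero] order_linear_one_plus[OF assms] add.IH
    by simp
qed

lemma elem_sym_poly_inject:
  fixes A B :: "'a::field multiset"
  assumes "elem_sym_poly A = elem_sym_poly B" and "size A = size B"
  shows "A = B"
proof (rule multiset_eqI)
  fix x
  have nonzero: "count A b = count B b" if "b \<noteq> 0" for b
    using assms(1) order_elem_sym_poly[OF that] by metis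
  have "size C = size (filter_mset (\<lambda>x. x \<noteq> 0) C) + count C 0" for C :: "'a multiset"
    by (induction C) auto
  moreover have "filter_mset (\<lambda>x. x \<noteq> 0) A = filter_mset (\<lambda>x. x \<noteq> 0) B"
    by (rule multiset_eqI) (simp add: nonzero)
  ultimately have "count A 0 = count B 0"
    using assms(2) by (metis add_left_cancel)
  then show "count A x = count B x"
    using nonzero by (cases "x = 0") auto
qed

lemma mset_eq_if_power_sums_eq:
  fixes A B :: "'a::field_char_0 multiset"
  assumes "size A = n" and "size B = n"
    and power_sums_eq: "\<And>q. q \<in> {1..n} \<Longrightarrow> mset_power_sum A q = mset_power_sum B q"
  shows "A = B"
proof -
  have low: "coeff (elem_sym_poly A) j = coeff (elem_sym_poly B) j" if "j \<le> n" for j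
    using that
  proof (induction j rule: less_induct)
    case (less j)
    show ?case
    proof (cases j)
      case 0
      then show ?thesis by (simp add: coeff_0_elem_sym_poly)
    next
      case (Suc t)
      have "of_nat j * coeff (elem_sym_poly A) j = of_nat j * coeff (elem_sym_poly B) j"
        unfolding newton_identity using less power_sums_eq by (intro sum.cong) auto
      then show ?thesis
        using Suc by (simp del: of_nat_Suc)
    qed
  qed
  have high: "coeff (elem_sym_poly A) j = coeff (elem_sym_poly B) j" if "n < j" for j
    using that assms degree_elem_sym_poly[of A] degree_elem_sym_poly[of B] by (simp add: coeff_eq_0)
  have "elem_sym_poly A = elem_sym_poly B"
    using low high by (meson not_le poly_eqI)
  then show ?thesis
    using assms(1,2) by (intro elem_sym_poly_inject) simp_all
qed

lemma subset_power_sum_nth: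
  "subset_power_sum {0..<length xs} ((!) xs) s k = (\<Sum>x\<in>#subset_sums s xs. x ^ k)"
  unfolding subset_power_sum_def subset_sums_def
  by (simp add: sum_unfold_sum_mset image_mset.compositionality o_def)

lemma power_sum_nth: "power_sum {0..<length xs} ((!) xs) k = mset_power_sum (mset xs) k"
proof -
  have "mset xs = image_mset ((!) xs) (mset_set {0..<length xs})"
    by (metis map_nth mset_map mset_upt)
  then show ?thesis
    by (simp add: power_sum_def mset_power_sum_def sum_unfold_sum_mset image_mset.compositionality o_def)
qed

theorem mainTheorem5:
  fixes n s :: nat
  assumes "1 \<le> s" and "s < n"
    and "\<forall>k\<in>{1..n}. moser (int s) k (real n) \<noteq> 0"
  shows "\<forall>xs ys :: complex list. length xs = n \<longrightarrow> length ys = n \<longrightarrow>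
           subset_sums s xs = subset_sums s ys \<longrightarrow> mset xs = mset ys"
proof (intro allI impI)
  fix xs ys :: "complex list"
  assume xs: "length xs = n" and ys: "length ys = n" and eq: "subset_sums s xs = subset_sums s ys"
  have "power_sum {0..<n} ((!) xs) k = power_sum {0..<n} ((!) ys) k" if "k \<in> {1..n}" for k
  proof (rule power_sums_eq_if_subset_power_sums_eq[OF finite_atLeastLessThan _ _ that])
    show "subset_power_sum {0..<n} ((!) xs) s k = subset_power_sum {0..<n} ((!) ys) s k" for k
      using subset_power_sum_nth[of xs s k] subset_power_sum_nth[of ys s k] eq xs ys by simp
    show "moser_coeff s k (card {0..<n}) \<noteq> (0 :: complex)" if "k \<in> {1..n}" for k
      using assms(3) that of_real_moser[OF assms(1), of k n] by (metis card_atLeastLessThan diff_zero of_real_eq_0_iff)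
  qed
  then show "mset xs = mset ys"
    using power_sum_nth[of xs] power_sum_nth[of ys] xs ys by (intro mset_eq_if_power_sums_eq[of _ n]) auto
qed

end
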